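(* Let $\mathcal{C}$ be an additive category, $n\ge1$, and $\mathcal{X}$ a covariantly finite subcategory such that every left $\mathcal{X}$-approximation has a special $n$-cokernel with respect to $\mathcal{X}$; let $\Sigma:\mathcal{C}/\mathcal{X}\to\mathcal{C}/\mathcal{X}$ be the functor described below. Suppose given a commutative diagram in $\mathcal{C}$ $$\begin{array}{ccccccccc} A_0 & \xrightarrow{f_0} & A_1 & \xrightarrow{f_1} & \cdots & \xrightarrow{f_{n-1}} & A_n & \xrightarrow{f_n} & A_{n+1}\\ \downarrow{\scriptstyle h_0} & & \downarrow{\scriptstyle h_1} & & & & \downarrow{\scriptstyle h_n} & & \downarrow{\scriptstyle h_{n+1}}\\ B_0 & \xrightarrow{g_0} & B_1 & \xrightarrow{g_1} & \cdots & \xrightarrow{g_{n-1}} & B_n & \xrightarrow{g_n} & B_{n+1} \end{array}$$ whose rows are right $n$-exact sequences with $f_0$ and $g_0$ $\mathcal{X}$-monic. Let $(-1)^n\underline{a_{n+1}}:A_{n+1}\to\Sigma A_0$ and $(-1)^n\underline{b_{n+1}}:B_{n+1}\to\Sigma B_0$ be the last morphisms of standard right $(n+2)$-angles associated with the two rows (for any choices of comparison morphisms). Then $$(\underline{h_0},\underline{h_1},\dots,\underline{h_{n+1}})$$ is a morphism between the two standard right $(n+2)$-angles $A_0\xrightarrow{\underline{f_0}}A_1\to\cdots\xrightarrow{\underline{f_n}}A_{n+1}\xrightarrow{(-1)^n\underline{a_{n+1}}}\Sigma A_0$ and $B_0\xrightarrow{\underline{g_0}}B_1\to\cdots\xrightarrow{\underline{g_n}}B_{n+1}\xrightarrow{(-1)^n\underline{b_{n+1}}}\Sigma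 B_0$ in $\mathcal{C}/\mathcal{X}$; in particular $\Sigma\underline{h_0}\cdot\underline{a_{n+1}}=\underline{b_{n+1}}\cdot\underline{h_{n+1}}$.
   Context: Subcategories are full and closed under isomorphisms, direct sums and direct summands. $\mathcal{C}/\mathcal{X}$ is the quotient by morphisms factoring through objects of $\mathcal{X}$; $\underline{f}$ is the class of $f$. $f:A\to B$ is $\mathcal{X}$-monic if every morphism $A\to X$ with $X\in\mathcal{X}$ factors through $f$; a left $\mathcal{X}$-approximation of $A$ is an $\mathcal{X}$-monic $A\to X$ with $X\in\mathcal{X}$; $\mathcal{X}$ is covariantly finite if every object has one. A weak cokernel of $f$ is $g$ with $gf=0$ through which every $h$ with $hf=0$ factors. A sequence $A_0\xrightarrow{f_0}\cdots\xrightarrow{f_n}A_{n+1}$ is right $n$-exact ($(f_1,\dots,f_n)$ is an $n$-cokernel of $f_0$) if $f_k$ is a weak cokernel of $f_{k-1}$ for $1\le k\le n-1$ and $f_n$ is a cokernel of $f_{n-1}$; $f_0$ has a special $n$-cokernel w.r.t. $\mathcal{X}$ if it has an $n$-cokernel whose intermediate objects $X_2,\dots,X_n$ lie in $\mathcal{X}$. The functor $\Sigma$: for each $A\in\mathcal{C}$ fix a right $n$-exact sequence $A\xrightarrow{\alpha_0}X_1\xrightarrow{\alpha_1}\cdots\xrightarrow{\alpha_{n-1}}X_n\xrightarrow{\alpha_n}\Sigma A$ with $\alpha_0$ a left $\mathcal{X}$-approximation and $X_i\in\mathcal{X}$; for $f:A\to A'$ choose a commutative ladder from this sequence to the one of $A'$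 starting with $f$ and ending with $g:\Sigma A\to\Sigma A'$, and put $\Sigma\underline f=\underline g$ (this is a well-defined additive functor). Standard right $(n+2)$-angle: given a right $n$-exact sequence $A_0\xrightarrow{f_0}A_1\xrightarrow{f_1}\cdots\xrightarrow{f_n}A_{n+1}$ with $f_0$ $\mathcal{X}$-monic, choose morphisms $a_i$ ($1\le i\le n+1$) forming a commutative ladder from it to the fixed sequence $A_0\xrightarrow{\alpha_0}X_1\to\cdots\to X_n\xrightarrow{\alpha_n}\Sigma A_0$ with $1_{A_0}$ in the first position and $a_{n+1}:A_{n+1}\to\Sigma A_0$ last. The sequence $A_0\xrightarrow{\underline{f_0}}A_1\xrightarrow{\underline{f_1}}\cdots\xrightarrow{\underline{f_n}}A_{n+1}\xrightarrow{(-1)^n\underline{a_{n+1}}}\Sigma A_0$ in $\mathcal{C}/\mathcal{X}$ is a standard right $(n+2)$-angle. *)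

theory Defs
  imports Main
begin

text \<open>A category is given by a set of objects, a set of morphisms, source and
target maps, composition (cmp g f = g after f), identities, and the
preadditive structure on each hom-set (addition, zero morphisms, negation).\<close>

record ('o, 'm) addcat =
  ob    :: "'o set"
  mor   :: "'m set"
  src   :: "'m \<Rightarrow> 'o"
  tgt   :: "'m \<Rightarrow> 'o"
  cmp   :: "'m \<Rightarrow> 'm \<Rightarrow> 'm"
  idm   :: "'o \<Rightarrow> 'm"
  madd  :: "'m \<Rightarrow> 'm \<Rightarrow> 'm"
  mzero :: "'o \<Rightarrow> 'o \<Rightarrow> 'm"
  mneg  :: "'m \<Rightarrow> 'm"

definition Hom :: "('o, 'm) addcat \<Rightarrow> 'o \<Rightarrow> 'o \<Rightarrow> 'm set" where
  "Hom C A B = {f \<in> mor C. src C f = A \<and> tgt C f = B}"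

definition mdiff :: "('o, 'm) addcat \<Rightarrow> 'm \<Rightarrow> 'm \<Rightarrow> 'm" where
  "mdiff C f g = madd C f (mneg C g)"

definition is_biproduct :: "('o, 'm) addcat \<Rightarrow> 'o \<Rightarrow> 'o \<Rightarrow> 'o \<Rightarrow> bool" where
  "is_biproduct C S A B \<longleftrightarrow> S \<in> ob C \<and>
     (\<exists>i1 i2 p1 p2. i1 \<in> Hom C A S \<and> i2 \<in> Hom C B S \<and> p1 \<in> Hom C S A \<and> p2 \<in> Hom C S B \<and>
        cmp C p1 i1 = idm C A \<and> cmp C p2 i2 = idm C B \<and>
        cmp C p2 i1 = mzero C A B \<and> cmp C p1 i2 = mzero C B A \<and>
        madd C (cmp C i1 p1) (cmp C i2 p2) = idm C S)"

definition additive_category :: "('o, 'm) addcat \<Rightarrow> bool" where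
  "additive_category C \<longleftrightarrow>
     \<comment> \<open>category axioms\<close>
     (\<forall>f \<in> mor C. src C f \<in> ob C \<and> tgt C f \<in> ob C) \<and>
     (\<forall>A \<in> ob C. idm C A \<in> Hom C A A) \<and>
     (\<forall>A \<in> ob C. \<forall>B \<in> ob C. \<forall>D \<in> ob C. \<forall>f \<in> Hom C A B. \<forall>g \<in> Hom C B D.
        cmp C g f \<in> Hom C A D) \<and>
     (\<forall>A \<in> ob C. \<forall>B \<in> ob C. \<forall>D \<in> ob C. \<forall>E \<in> ob C.
        \<forall>f \<in> Hom C A B. \<forall>g \<in> Hom C B D. \<forall>h \<in> Hom C D E.
        cmp C h (cmp C g f) = cmp C (cmp C h g) f) \<and>
     (\<forall>A \<in> ob C. \<forall>B \<in> ob C. \<forall>f \<in> Hom C A B.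
        cmp C f (idm C A) = f \<and> cmp C (idm C B) f = f) \<and>
     \<comment> \<open>each hom-set is an abelian group\<close>
     (\<forall>A \<in> ob C. \<forall>B \<in> ob C.
        mzero C A B \<in> Hom C A B \<and>
        (\<forall>f \<in> Hom C A B. \<forall>g \<in> Hom C A B. madd C f g \<in> Hom C A B) \<and>
        (\<forall>f \<in> Hom C A B. mneg C f \<in> Hom C A B) \<and>
        (\<forall>f \<in> Hom C A B. \<forall>g \<in> Hom C A B. \<forall>h \<in> Hom C A B.
           madd C (madd C f g) h = madd C f (madd C g h)) \<and>
        (\<forall>f \<in> Hom C A B. \<forall>g \<in> Hom C A B. madd C f g = madd C g f) \<and>
        (\<forall>f \<in> Hom C A B. madd C f (mzero C A B) = f) \<and>
        (\<forall>f \<in> Hom C A B. madd C f (mneg C f) = mzero C A B)) \<and>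
     \<comment> \<open>composition is bilinear\<close>
     (\<forall>A \<in> ob C. \<forall>B \<in> ob C. \<forall>D \<in> ob C.
        \<forall>f \<in> Hom C A B. \<forall>f' \<in> Hom C A B. \<forall>g \<in> Hom C B D. \<forall>g' \<in> Hom C B D.
        cmp C g (madd C f f') = madd C (cmp C g f) (cmp C g f') \<and>
        cmp C (madd C g g') f = madd C (cmp C g f) (cmp C g' f)) \<and>
     \<comment> \<open>zero object and binary biproducts\<close>
     (\<exists>Z \<in> ob C. idm C Z = mzero C Z Z) \<and>
     (\<forall>A \<in> ob C. \<forall>B \<in> ob C. \<exists>S. is_biproduct C S A B)"

definition is_iso :: "('o, 'm) addcat \<Rightarrow> 'm \<Rightarrow> bool" where
  "is_iso C f \<longleftrightarrow> f \<in> mor C \<and>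
     (\<exists>g \<in> Hom C (tgt C f) (src C f). cmp C g f = idm C (src C f) \<and> cmp C f g = idm C (tgt C f))"

text \<open>A (full) subcategory, given by its class of objects, closed under
isomorphisms, (binary) direct sums and direct summands.\<close>

definition subcategory :: "('o, 'm) addcat \<Rightarrow> 'o set \<Rightarrow> bool" where
  "subcategory C X \<longleftrightarrow> X \<subseteq> ob C \<and>
     (\<forall>f. is_iso C f \<longrightarrow> src C f \<in> X \<longrightarrow> tgt C f \<in> X) \<and>
     (\<forall>S A B. is_biproduct C S A B \<longrightarrow> A \<in> X \<longrightarrow> B \<in> X \<longrightarrow> S \<in> X) \<and>
     (\<forall>S A B. is_biproduct C S A B \<longrightarrow> S \<in> X \<longrightarrow> A \<in> ob C \<longrightarrow> B \<in> ob C \<longrightarrow> A \<in> X)"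

definition factors_through :: "('o, 'm) addcat \<Rightarrow> 'o set \<Rightarrow> 'm \<Rightarrow> bool" where
  "factors_through C X f \<longleftrightarrow>
     (\<exists>Y \<in> X. \<exists>u \<in> Hom C (src C f) Y. \<exists>v \<in> Hom C Y (tgt C f). f = cmp C v u)"

definition quot_eq :: "('o, 'm) addcat \<Rightarrow> 'o set \<Rightarrow> 'm \<Rightarrow> 'm \<Rightarrow> bool" where
  "quot_eq C X f g \<longleftrightarrow> f \<in> mor C \<and> g \<in> mor C \<and>
     src C f = src C g \<and> tgt C f = tgt C g \<and> factors_through C X (mdiff C f g)"

definition X_monic :: "('o, 'm) addcat \<Rightarrow> 'o set \<Rightarrow> 'm \<Rightarrow> bool" where
  "X_monic C X f \<longleftrightarrow> f \<in> mor C \<and>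
     (\<forall>Y \<in> X. \<forall>u \<in> Hom C (src C f) Y. \<exists>v \<in> Hom C (tgt C f) Y. u = cmp C v f)"

definition left_approx :: "('o, 'm) addcat \<Rightarrow> 'o set \<Rightarrow> 'o \<Rightarrow> 'm \<Rightarrow> bool" where
  "left_approx C X A f \<longleftrightarrow> X_monic C X f \<and> src C f = A \<and> tgt C f \<in> X"

definition covariantly_finite :: "('o, 'm) addcat \<Rightarrow> 'o set \<Rightarrow> bool" where
  "covariantly_finite C X \<longleftrightarrow> (\<forall>A \<in> ob C. \<exists>f. left_approx C X A f)"

definition weak_cokernel :: "('o, 'm) addcat \<Rightarrow> 'm \<Rightarrow> 'm \<Rightarrow> bool" where
  "weak_cokernel C f g \<longleftrightarrow> f \<in> mor C \<and> g \<in> mor C \<and> src C g = tgt C f \<and>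
     cmp C g f = mzero C (src C f) (tgt C g) \<and>
     (\<forall>D \<in> ob C. \<forall>h \<in> Hom C (tgt C f) D. cmp C h f = mzero C (src C f) D \<longrightarrow>
        (\<exists>k \<in> Hom C (tgt C g) D. h = cmp C k g))"

definition cokernel :: "('o, 'm) addcat \<Rightarrow> 'm \<Rightarrow> 'm \<Rightarrow> bool" where
  "cokernel C f g \<longleftrightarrow> f \<in> mor C \<and> g \<in> mor C \<and> src C g = tgt C f \<and>
     cmp C g f = mzero C (src C f) (tgt C g) \<and>
     (\<forall>D \<in> ob C. \<forall>h \<in> Hom C (tgt C f) D. cmp C h f = mzero C (src C f) D \<longrightarrow>
        (\<exists>!k. k \<in> Hom C (tgt C g) D \<and> h = cmp C k g))"

text \<open>A sequence A_0 --f_0--> A_1 --> ... --f_n--> A_{n+1} is encoded by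
functions obj :: nat => 'o and ms :: nat => 'm (only indices up to n+1 resp. n matter).\<close>

definition is_sequence :: "('o, 'm) addcat \<Rightarrow> nat \<Rightarrow> (nat \<Rightarrow> 'o) \<Rightarrow> (nat \<Rightarrow> 'm) \<Rightarrow> bool" where
  "is_sequence C n obj ms \<longleftrightarrow> (\<forall>k \<le> n. ms k \<in> Hom C (obj k) (obj (Suc k)))"

definition right_n_exact :: "('o, 'm) addcat \<Rightarrow> nat \<Rightarrow> (nat \<Rightarrow> 'o) \<Rightarrow> (nat \<Rightarrow> 'm) \<Rightarrow> bool" where
  "right_n_exact C n obj ms \<longleftrightarrow> is_sequence C n obj ms \<and>
     (\<forall>k. 1 \<le> k \<and> k \<le> n - 1 \<longrightarrow> weak_cokernel C (ms (k - 1)) (ms k)) \<and>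
     cokernel C (ms (n - 1)) (ms n)"

definition has_special_n_cokernel :: "('o, 'm) addcat \<Rightarrow> 'o set \<Rightarrow> nat \<Rightarrow> 'm \<Rightarrow> bool" where
  "has_special_n_cokernel C X n f \<longleftrightarrow>
     (\<exists>obj ms. obj 0 = src C f \<and> obj 1 = tgt C f \<and> ms 0 = f \<and> right_n_exact C n obj ms \<and>
        (\<forall>i. 2 \<le> i \<and> i \<le> n \<longrightarrow> obj i \<in> X))"

definition ladder :: "('o, 'm) addcat \<Rightarrow> nat \<Rightarrow> (nat \<Rightarrow> 'o) \<Rightarrow> (nat \<Rightarrow> 'm) \<Rightarrow>
    (nat \<Rightarrow> 'o) \<Rightarrow> (nat \<Rightarrow> 'm) \<Rightarrow> (nat \<Rightarrow> 'm) \<Rightarrow> bool" where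
  "ladder C n obj1 ms1 obj2 ms2 c \<longleftrightarrow>
     (\<forall>i \<le> Suc n. c i \<in> Hom C (obj1 i) (obj2 i)) \<and>
     (\<forall>i \<le> n. cmp C (c (Suc i)) (ms1 i) = cmp C (ms2 i) (c i))"

text \<open>The fixed choice of sequences defining Sigma: for every object A,
A = SObj A 0 --SMor A 0--> SObj A 1 --> ... --> SObj A n --SMor A n--> SObj A (n+1) = Sigma A,
right n-exact, SMor A 0 a left X-approximation, SObj A i in X for 1 <= i <= n.\<close>

definition sigma_data :: "('o, 'm) addcat \<Rightarrow> 'o set \<Rightarrow> nat \<Rightarrow>
    ('o \<Rightarrow> nat \<Rightarrow> 'o) \<Rightarrow> ('o \<Rightarrow> nat \<Rightarrow> 'm) \<Rightarrow> bool" where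
  "sigma_data C X n SObj SMor \<longleftrightarrow>
     (\<forall>A \<in> ob C. SObj A 0 = A \<and> right_n_exact C n (SObj A) (SMor A) \<and>
        left_approx C X A (SMor A 0) \<and> (\<forall>i. 1 \<le> i \<and> i \<le> n \<longrightarrow> SObj A i \<in> X))"

definition sign_mor :: "('o, 'm) addcat \<Rightarrow> nat \<Rightarrow> 'm \<Rightarrow> 'm" where
  "sign_mor C n f = (if even n then f else mneg C f)"

end

theory Submission
  imports Defs
begin

text \<open>The difference \<open>d i = c i \<circ> a i - b i \<circ> h i\<close> is a commutative ladder from the row
\<open>A\<close> to the fixed sequence \<open>B 0 \<rightarrow> X 1 \<rightarrow> \<dots> \<rightarrow> X n \<rightarrow> \<Sigma>(B 0)\<close>, and \<open>d 0 = h 0 - h 0 = 0\<close>.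
Since the row is right \<open>n\<close>-exact and the target is a complex, such a ladder is null-homotopic at its
end: inductively, \<open>d (m+1) - \<alpha> m \<circ> t m\<close> is killed by \<open>f m\<close> and so factors through the weak
cokernel \<open>f (m+1)\<close>, which gives \<open>t (m+1)\<close>; at \<open>m = n\<close> the cokernel \<open>f n\<close> is epic, hence
\<open>d (n+1) = \<alpha> n \<circ> t n\<close> factors through \<open>X n \<in> \<X>\<close>.\<close>

lemma HomD: "f \<in> Hom C A B \<Longrightarrow> f \<in> mor C \<and> src C f = A \<and> tgt C f = B"
  unfolding Hom_def by blast

lemma is_sequence_hom: "is_sequence C n A f \<Longrightarrow> k \<le> n \<Longrightarrow> f k \<in> Hom C (A k) (A (Suc k))"
  unfolding is_sequence_def by blast

lemma right_n_exact_is_sequence: "right_n_exact C n A f \<Longrightarrow> is_sequence C n A f"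
  unfolding right_n_exact_def by blast

lemma ladder_hom: "ladder C n A f B g h \<Longrightarrow> i \<le> Suc n \<Longrightarrow> h i \<in> Hom C (A i) (B i)"
  unfolding ladder_def by blast

lemma ladder_commute:
  "ladder C n A f B g h \<Longrightarrow> i \<le> n \<Longrightarrow> cmp C (h (Suc i)) (f i) = cmp C (g i) (h i)"
  unfolding ladder_def by blast

definition is_complex :: "('o, 'm) addcat \<Rightarrow> nat \<Rightarrow> (nat \<Rightarrow> 'o) \<Rightarrow> (nat \<Rightarrow> 'm) \<Rightarrow> bool" where
  "is_complex C n Y \<alpha> \<longleftrightarrow> is_sequence C n Y \<alpha> \<and>
     (\<forall>k. 1 \<le> k \<and> k \<le> n \<longrightarrow> cmp C (\<alpha> k) (\<alpha> (k - 1)) = mzero C (Y (k - 1)) (Y (Suc k)))"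

lemma right_n_exact_is_complex:
  assumes exact: "right_n_exact C n Y \<alpha>"
  shows "is_complex C n Y \<alpha>"
  unfolding is_complex_def
proof (intro conjI allI impI)
  show seq: "is_sequence C n Y \<alpha>" using exact by (rule right_n_exact_is_sequence)
  fix k assume k: "1 \<le> k \<and> k \<le> n"
  have "\<alpha> (k - 1) \<in> Hom C (Y (k - 1)) (Y k)" "\<alpha> k \<in> Hom C (Y k) (Y (Suc k))"
    using k is_sequence_hom[OF seq, of "k - 1"] is_sequence_hom[OF seq, of k] by auto
  then have "src C (\<alpha> (k - 1)) = Y (k - 1)" "tgt C (\<alpha> k) = Y (Suc k)" by (auto simp: Hom_def)
  moreover have "weak_cokernel C (\<alpha> (k - 1)) (\<alpha> k) \<or> cokernel C (\<alpha> (k - 1)) (\<alpha> k)"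
    using exact k le_diff_conv2[of 1 n k] unfolding right_n_exact_def by (cases "k = n") auto
  ultimately show "cmp C (\<alpha> k) (\<alpha> (k - 1)) = mzero C (Y (k - 1)) (Y (Suc k))"
    unfolding weak_cokernel_def cokernel_def by metis
qed

locale additive_cat =
  fixes C :: "('o, 'm) addcat"
  assumes cat: "additive_category C"
begin

lemma hom_obs: "f \<in> Hom C A B \<Longrightarrow> A \<in> ob C \<and> B \<in> ob C"
proof -
  have "\<forall>f \<in> mor C. src C f \<in> ob C \<and> tgt C f \<in> ob C"
    using cat unfolding additive_category_def by (elim conjE)
  then show "f \<in> Hom C A B \<Longrightarrow> A \<in> ob C \<and> B \<in> ob C" unfolding Hom_def by blast
qed

lemma id_hom: "A \<in> ob C \<Longrightarrow> idm C A \<in> Hom C A A"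
proof -
  have "\<forall>A \<in> ob C. idm C A \<in> Hom C A A"
    using cat unfolding additive_category_def by (elim conjE)
  then show "A \<in> ob C \<Longrightarrow> idm C A \<in> Hom C A A" by blast
qed

lemma comp_hom:
  assumes f: "f \<in> Hom C A B" and g: "g \<in> Hom C B D"
  shows "cmp C g f \<in> Hom C A D"
proof -
  have "\<forall>A \<in> ob C. \<forall>B \<in> ob C. \<forall>D \<in> ob C. \<forall>f \<in> Hom C A B. \<forall>g \<in> Hom C B D.
      cmp C g f \<in> Hom C A D"
    using cat unfolding additive_category_def by (elim conjE)
  then show ?thesis using f g hom_obs[OF f] hom_obs[OF g] by blast
qed

lemma comp_assoc:
  assumes f: "f \<in> Hom C A B" and g: "g \<in> Hom C B D" and h: "h \<in> Hom C D E"
  shows "cmp C h (cmp C g f) = cmp C (cmp C h g) f"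
proof -
  have "\<forall>A \<in> ob C. \<forall>B \<in> ob C. \<forall>D \<in> ob C. \<forall>E \<in> ob C.
      \<forall>f \<in> Hom C A B. \<forall>g \<in> Hom C B D. \<forall>h \<in> Hom C D E.
      cmp C h (cmp C g f) = cmp C (cmp C h g) f"
    using cat unfolding additive_category_def by (elim conjE)
  then show ?thesis using f g h hom_obs[OF f] hom_obs[OF h] by blast
qed

lemma comp_id:
  assumes f: "f \<in> Hom C A B"
  shows comp_id_right: "cmp C f (idm C A) = f" and comp_id_left: "cmp C (idm C B) f = f"
proof -
  have "\<forall>A \<in> ob C. \<forall>B \<in> ob C. \<forall>f \<in> Hom C A B. cmp C f (idm C A) = f \<and> cmp C (idm C B) f = f"
    using cat unfolding additive_category_def by (elim conjE)
  then show "cmp C f (idm C A) = f" "cmp C (idm C B) f = f" using f hom_obs[OF f] by blast+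
qed

lemma hom_abelian_group:
  assumes "A \<in> ob C" "B \<in> ob C"
  shows "mzero C A B \<in> Hom C A B \<and>
      (\<forall>f \<in> Hom C A B. \<forall>g \<in> Hom C A B. madd C f g \<in> Hom C A B) \<and>
      (\<forall>f \<in> Hom C A B. mneg C f \<in> Hom C A B) \<and>
      (\<forall>f \<in> Hom C A B. \<forall>g \<in> Hom C A B. \<forall>h \<in> Hom C A B.
         madd C (madd C f g) h = madd C f (madd C g h)) \<and>
      (\<forall>f \<in> Hom C A B. \<forall>g \<in> Hom C A B. madd C f g = madd C g f) \<and>
      (\<forall>f \<in> Hom C A B. madd C f (mzero C A B) = f) \<and>
      (\<forall>f \<in> Hom C A B. madd C f (mneg C f) = mzero C A B)"
proof -
  have "\<forall>A \<in> ob C. \<forall>B \<in> ob C.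
      mzero C A B \<in> Hom C A B \<and>
      (\<forall>f \<in> Hom C A B. \<forall>g \<in> Hom C A B. madd C f g \<in> Hom C A B) \<and>
      (\<forall>f \<in> Hom C A B. mneg C f \<in> Hom C A B) \<and>
      (\<forall>f \<in> Hom C A B. \<forall>g \<in> Hom C A B. \<forall>h \<in> Hom C A B.
         madd C (madd C f g) h = madd C f (madd C g h)) \<and>
      (\<forall>f \<in> Hom C A B. \<forall>g \<in> Hom C A B. madd C f g = madd C g f) \<and>
      (\<forall>f \<in> Hom C A B. madd C f (mzero C A B) = f) \<and>
      (\<forall>f \<in> Hom C A B. madd C f (mneg C f) = mzero C A B)"
    using cat unfolding additive_category_def by (elim conjE)
  then show ?thesis using assms by blast
qed

lemma zero_hom: "A \<in> ob C \<Longrightarrow> B \<in> ob C \<Longrightarrow> mzero C A B \<in> Hom C A B"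
  using hom_abelian_group by blast

lemma add_hom: "f \<in> Hom C A B \<Longrightarrow> g \<in> Hom C A B \<Longrightarrow> madd C f g \<in> Hom C A B"
  using hom_abelian_group[of A B] hom_obs[of f] by blast

lemma neg_hom: "f \<in> Hom C A B \<Longrightarrow> mneg C f \<in> Hom C A B"
  using hom_abelian_group[of A B] hom_obs[of f] by blast

lemma add_assoc: "f \<in> Hom C A B \<Longrightarrow> g \<in> Hom C A B \<Longrightarrow> h \<in> Hom C A B \<Longrightarrow>
    madd C (madd C f g) h = madd C f (madd C g h)"
  using hom_abelian_group[of A B] hom_obs[of f] by blast

lemma add_commute: "f \<in> Hom C A B \<Longrightarrow> g \<in> Hom C A B \<Longrightarrow> madd C f g = madd C g f"
  using hom_abelian_group[of A B] hom_obs[of f] by blast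

lemma add_zero_right: "f \<in> Hom C A B \<Longrightarrow> madd C f (mzero C A B) = f"
  using hom_abelian_group[of A B] hom_obs[of f] by blast

lemma add_neg_right: "f \<in> Hom C A B \<Longrightarrow> madd C f (mneg C f) = mzero C A B"
  using hom_abelian_group[of A B] hom_obs[of f] by blast

lemma comp_add_right:
  assumes f: "f \<in> Hom C A B" and f': "f' \<in> Hom C A B" and g: "g \<in> Hom C B D"
  shows "cmp C g (madd C f f') = madd C (cmp C g f) (cmp C g f')"
proof -
  have "\<forall>A \<in> ob C. \<forall>B \<in> ob C. \<forall>D \<in> ob C.
      \<forall>f \<in> Hom C A B. \<forall>f' \<in> Hom C A B. \<forall>g \<in> Hom C B D. \<forall>g' \<in> Hom C B D.
      cmp C g (madd C f f') = madd C (cmp C g f) (cmp C g f') \<and>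
      cmp C (madd C g g') f = madd C (cmp C g f) (cmp C g' f)"
    using cat unfolding additive_category_def by (elim conjE)
  then show ?thesis using f f' g hom_obs[OF f] hom_obs[OF g] by blast
qed

lemma comp_add_left:
  assumes f: "f \<in> Hom C A B" and g: "g \<in> Hom C B D" and g': "g' \<in> Hom C B D"
  shows "cmp C (madd C g g') f = madd C (cmp C g f) (cmp C g' f)"
proof -
  have "\<forall>A \<in> ob C. \<forall>B \<in> ob C. \<forall>D \<in> ob C.
      \<forall>f \<in> Hom C A B. \<forall>f' \<in> Hom C A B. \<forall>g \<in> Hom C B D. \<forall>g' \<in> Hom C B D.
      cmp C g (madd C f f') = madd C (cmp C g f) (cmp C g f') \<and>
      cmp C (madd C g g') f = madd C (cmp C g f) (cmp C g' f)"
    using cat unfolding additive_category_def by (elim conjE)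
  then show ?thesis using f g g' hom_obs[OF f] hom_obs[OF g] by blast
qed

lemma add_zero_left: "f \<in> Hom C A B \<Longrightarrow> madd C (mzero C A B) f = f"
  using add_commute add_zero_right zero_hom hom_obs by metis

lemma add_idem_zero:
  assumes z: "z \<in> Hom C A B" and idem: "madd C z z = z"
  shows "z = mzero C A B"
proof -
  have "mzero C A B = madd C (madd C z z) (mneg C z)" using idem add_neg_right[OF z] by simp
  also have "\<dots> = z"
    using add_assoc[OF z z neg_hom[OF z]] add_neg_right[OF z] add_zero_right[OF z] by simp
  finally show ?thesis by simp
qed

lemma comp_zero_right:
  assumes g: "g \<in> Hom C B D" and A: "A \<in> ob C"
  shows "cmp C g (mzero C A B) = mzero C A D"
proof (rule add_idem_zero)
  have z: "mzero C A B \<in> Hom C A B" using zero_hom A hom_obs[OF g] by blast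
  show "cmp C g (mzero C A B) \<in> Hom C A D" using comp_hom[OF z g] .
  have "madd C (cmp C g (mzero C A B)) (cmp C g (mzero C A B))
      = cmp C g (madd C (mzero C A B) (mzero C A B))"
    using comp_add_right[OF z z g] by simp
  also have "\<dots> = cmp C g (mzero C A B)" using add_zero_right[OF z] by simp
  finally show "madd C (cmp C g (mzero C A B)) (cmp C g (mzero C A B)) = cmp C g (mzero C A B)" .
qed

lemma comp_zero_left:
  assumes f: "f \<in> Hom C A B" and D: "D \<in> ob C"
  shows "cmp C (mzero C B D) f = mzero C A D"
proof (rule add_idem_zero)
  have z: "mzero C B D \<in> Hom C B D" using zero_hom D hom_obs[OF f] by blast
  show "cmp C (mzero C B D) f \<in> Hom C A D" using comp_hom[OF f z] .
  have "madd C (cmp C (mzero C B D) f) (cmp C (mzero C B D) f)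
      = cmp C (madd C (mzero C B D) (mzero C B D)) f"
    using comp_add_left[OF f z z] by simp
  also have "\<dots> = cmp C (mzero C B D) f" using add_zero_right[OF z] by simp
  finally show "madd C (cmp C (mzero C B D) f) (cmp C (mzero C B D) f) = cmp C (mzero C B D) f" .
qed

lemma add_eq_zero_imp_eq_neg:
  assumes f: "f \<in> Hom C A B" and g: "g \<in> Hom C A B" and sum: "madd C f g = mzero C A B"
  shows "g = mneg C f"
proof -
  have nf: "mneg C f \<in> Hom C A B" using neg_hom[OF f] .
  have "g = madd C (madd C (mneg C f) f) g"
    using add_commute[OF f nf] add_neg_right[OF f] add_zero_left[OF g] by simp
  also have "\<dots> = mneg C f" using add_assoc[OF nf f g] sum add_zero_right[OF nf] by simp
  finally show ?thesis .
qed

lemma comp_neg_right: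
  assumes f: "f \<in> Hom C A B" and g: "g \<in> Hom C B D"
  shows "cmp C g (mneg C f) = mneg C (cmp C g f)"
proof (rule add_eq_zero_imp_eq_neg)
  show "cmp C g f \<in> Hom C A D" "cmp C g (mneg C f) \<in> Hom C A D"
    using comp_hom f g neg_hom by blast+
  show "madd C (cmp C g f) (cmp C g (mneg C f)) = mzero C A D"
    using comp_add_right[OF f neg_hom[OF f] g] add_neg_right[OF f] comp_zero_right[OF g] hom_obs[OF f]
    by simp
qed

lemma comp_neg_left:
  assumes f: "f \<in> Hom C A B" and g: "g \<in> Hom C B D"
  shows "cmp C (mneg C g) f = mneg C (cmp C g f)"
proof (rule add_eq_zero_imp_eq_neg)
  show "cmp C g f \<in> Hom C A D" "cmp C (mneg C g) f \<in> Hom C A D"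
    using comp_hom f g neg_hom by blast+
  show "madd C (cmp C g f) (cmp C (mneg C g) f) = mzero C A D"
    using comp_add_left[OF f g neg_hom[OF g]] add_neg_right[OF g] comp_zero_left[OF f] hom_obs[OF g]
    by simp
qed

lemma diff_hom: "f \<in> Hom C A B \<Longrightarrow> g \<in> Hom C A B \<Longrightarrow> mdiff C f g \<in> Hom C A B"
  unfolding mdiff_def using add_hom neg_hom by blast

lemma diff_self: "f \<in> Hom C A B \<Longrightarrow> mdiff C f f = mzero C A B"
  unfolding mdiff_def by (rule add_neg_right)

lemma diff_add_cancel:
  assumes f: "f \<in> Hom C A B" and g: "g \<in> Hom C A B"
  shows "madd C (mdiff C f g) g = f"
  unfolding mdiff_def using add_assoc[OF f neg_hom[OF g] g] add_commute[OF g neg_hom[OF g]]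
    add_neg_right[OF g] add_zero_right[OF f] by simp

lemma diff_eq_zero_imp_eq:
  assumes f: "f \<in> Hom C A B" and g: "g \<in> Hom C A B" and "mdiff C f g = mzero C A B"
  shows "f = g"
  using diff_add_cancel[OF f g] assms(3) add_zero_left[OF g] by simp

lemma comp_diff_right:
  assumes "f \<in> Hom C A B" "f' \<in> Hom C A B" "g \<in> Hom C B D"
  shows "cmp C g (mdiff C f f') = mdiff C (cmp C g f) (cmp C g f')"
  unfolding mdiff_def using comp_add_right[OF assms(1) neg_hom[OF assms(2)] assms(3)]
    comp_neg_right[OF assms(2,3)] by simp

lemma comp_diff_left:
  assumes "f \<in> Hom C A B" "g \<in> Hom C B D" "g' \<in> Hom C B D"
  shows "cmp C (mdiff C g g') f = mdiff C (cmp C g f) (cmp C g' f)"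
  unfolding mdiff_def using comp_add_left[OF assms(1,2) neg_hom[OF assms(3)]]
    comp_neg_left[OF assms(1,3)] by simp

lemma neg_diff:
  assumes f: "f \<in> Hom C A B" and g: "g \<in> Hom C A B"
  shows "mdiff C (mneg C f) (mneg C g) = mneg C (mdiff C f g)"
proof -
  have i: "idm C B \<in> Hom C B B" using id_hom hom_obs[OF f] by blast
  have "\<And>x. x \<in> Hom C A B \<Longrightarrow> cmp C (mneg C (idm C B)) x = mneg C x"
    using comp_neg_left[OF _ i] comp_id_left by simp
  then show ?thesis using comp_diff_right[OF f g neg_hom[OF i]] diff_hom[OF f g] f g by simp
qed

lemma right_n_exact_factor:
  assumes exact: "right_n_exact C n A f" and m: "1 \<le> m" "m \<le> n"
    and e: "e \<in> Hom C (A m) D" and ez: "cmp C e (f (m - 1)) = mzero C (A (m - 1)) D"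
  shows "\<exists>t \<in> Hom C (A (Suc m)) D. e = cmp C t (f m)"
proof -
  have seq: "is_sequence C n A f" using exact by (rule right_n_exact_is_sequence)
  have "f (m - 1) \<in> Hom C (A (m - 1)) (A m)" "f m \<in> Hom C (A m) (A (Suc m))"
    using m is_sequence_hom[OF seq, of "m - 1"] is_sequence_hom[OF seq, of m] by auto
  then have "src C (f (m - 1)) = A (m - 1)" "tgt C (f (m - 1)) = A m" "tgt C (f m) = A (Suc m)"
    by (auto simp: Hom_def)
  moreover have "D \<in> ob C" using hom_obs[OF e] by blast
  moreover have "weak_cokernel C (f (m - 1)) (f m) \<or> cokernel C (f (m - 1)) (f m)"
    using exact m le_diff_conv2[of 1 n m] unfolding right_n_exact_def by (cases "m = n") auto
  ultimately show ?thesis using e ez unfolding weak_cokernel_def cokernel_def by metis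
qed

lemma right_n_exact_last_epi:
  assumes exact: "right_n_exact C n A f" and n: "1 \<le> n"
    and e: "e \<in> Hom C (A (Suc n)) D" and ez: "cmp C e (f n) = mzero C (A n) D"
  shows "e = mzero C (A (Suc n)) D"
proof -
  have seq: "is_sequence C n A f" using exact by (rule right_n_exact_is_sequence)
  have f0: "f (n - 1) \<in> Hom C (A (n - 1)) (A n)" using is_sequence_hom[OF seq, of "n - 1"] n by simp
  have f1: "f n \<in> Hom C (A n) (A (Suc n))" using is_sequence_hom[OF seq] by simp
  have D: "D \<in> ob C" using hom_obs[OF e] by blast
  have z: "mzero C (A (Suc n)) D \<in> Hom C (A (Suc n)) D" using zero_hom hom_obs[OF e] by blast
  have "\<exists>!k. k \<in> Hom C (A (Suc n)) D \<and> cmp C e (f n) = cmp C k (f n)"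
    using exact D comp_hom[OF f1 e] ez comp_zero_left[OF f0 D] HomD[OF f0] HomD[OF f1]
    unfolding right_n_exact_def cokernel_def by metis
  moreover have "cmp C e (f n) = cmp C (mzero C (A (Suc n)) D) (f n)"
    using ez comp_zero_left[OF f1 D] by simp
  ultimately show ?thesis using e z by blast
qed

lemma ladder_comp:
  assumes sA: "is_sequence C n A f" and sY: "is_sequence C n Y \<alpha>" and sZ: "is_sequence C n Z \<beta>"
    and a: "ladder C n A f Y \<alpha> a" and c: "ladder C n Y \<alpha> Z \<beta> c"
  shows "ladder C n A f Z \<beta> (\<lambda>i. cmp C (c i) (a i))"
  unfolding ladder_def
proof (intro conjI allI impI)
  fix i assume "i \<le> Suc n"
  then show "cmp C (c i) (a i) \<in> Hom C (A i) (Z i)" using comp_hom ladder_hom a c by blast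
next
  fix i assume i: "i \<le> n"
  have f: "f i \<in> Hom C (A i) (A (Suc i))" and \<alpha>: "\<alpha> i \<in> Hom C (Y i) (Y (Suc i))"
    and \<beta>: "\<beta> i \<in> Hom C (Z i) (Z (Suc i))"
    using is_sequence_hom sA sY sZ i by blast+
  have ai: "a i \<in> Hom C (A i) (Y i)" and ai': "a (Suc i) \<in> Hom C (A (Suc i)) (Y (Suc i))"
    and ci: "c i \<in> Hom C (Y i) (Z i)" and ci': "c (Suc i) \<in> Hom C (Y (Suc i)) (Z (Suc i))"
    using ladder_hom a c i by (blast intro: le_SucI)+
  have "cmp C (cmp C (c (Suc i)) (a (Suc i))) (f i) = cmp C (c (Suc i)) (cmp C (\<alpha> i) (a i))"
    using comp_assoc[OF f ai' ci'] ladder_commute[OF a i] by simp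
  also have "\<dots> = cmp C (cmp C (\<beta> i) (c i)) (a i)"
    using comp_assoc[OF ai \<alpha> ci'] ladder_commute[OF c i] by simp
  also have "\<dots> = cmp C (\<beta> i) (cmp C (c i) (a i))"
    using comp_assoc[OF ai ci \<beta>] by simp
  finally show "cmp C (cmp C (c (Suc i)) (a (Suc i))) (f i) = cmp C (\<beta> i) (cmp C (c i) (a i))" .
qed

lemma ladder_diff:
  assumes sA: "is_sequence C n A f" and sY: "is_sequence C n Y \<alpha>"
    and a: "ladder C n A f Y \<alpha> a" and a': "ladder C n A f Y \<alpha> a'"
  shows "ladder C n A f Y \<alpha> (\<lambda>i. mdiff C (a i) (a' i))"
  unfolding ladder_def
proof (intro conjI allI impI)
  fix i assume "i \<le> Suc n"
  then show "mdiff C (a i) (a' i) \<in> Hom C (A i) (Y i)" using diff_hom ladder_hom a a' by blast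
next
  fix i assume i: "i \<le> n"
  note hom = is_sequence_hom[OF sA i] is_sequence_hom[OF sY i]
    ladder_hom[OF a, of i] ladder_hom[OF a, of "Suc i"] ladder_hom[OF a', of i] ladder_hom[OF a', of "Suc i"]
  show "cmp C (mdiff C (a (Suc i)) (a' (Suc i))) (f i) = cmp C (\<alpha> i) (mdiff C (a i) (a' i))"
    using comp_diff_left comp_diff_right hom i ladder_commute[OF a i] ladder_commute[OF a' i] by simp
qed

lemma ladder_null_homotopy_step:
  assumes exact: "right_n_exact C n A f" and complex: "is_complex C n Y \<alpha>"
    and d: "ladder C n A f Y \<alpha> d" and m: "Suc m \<le> n"
    and t: "t \<in> Hom C (A (Suc m)) (Y m)"
    and t_ok: "cmp C (mdiff C (d (Suc m)) (cmp C (\<alpha> m) t)) (f m) = mzero C (A m) (Y (Suc m))"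
  shows "\<exists>t' \<in> Hom C (A (Suc (Suc m))) (Y (Suc m)).
    cmp C (mdiff C (d (Suc (Suc m))) (cmp C (\<alpha> (Suc m)) t')) (f (Suc m))
      = mzero C (A (Suc m)) (Y (Suc (Suc m)))"
proof -
  have seqA: "is_sequence C n A f" using exact by (rule right_n_exact_is_sequence)
  have seqY: "is_sequence C n Y \<alpha>" using complex unfolding is_complex_def by blast
  have f: "f (Suc m) \<in> Hom C (A (Suc m)) (A (Suc (Suc m)))"
    using is_sequence_hom[OF seqA m] .
  have \<alpha>0: "\<alpha> m \<in> Hom C (Y m) (Y (Suc m))" and \<alpha>1: "\<alpha> (Suc m) \<in> Hom C (Y (Suc m)) (Y (Suc (Suc m)))"
    using is_sequence_hom[OF seqY] m by simp_all
  have d1: "d (Suc m) \<in> Hom C (A (Suc m)) (Y (Suc m))"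
    and d2: "d (Suc (Suc m)) \<in> Hom C (A (Suc (Suc m))) (Y (Suc (Suc m)))"
    using ladder_hom[OF d] m by simp_all
  define e where "e = mdiff C (d (Suc m)) (cmp C (\<alpha> m) t)"
  have e: "e \<in> Hom C (A (Suc m)) (Y (Suc m))"
    unfolding e_def using diff_hom[OF d1 comp_hom[OF t \<alpha>0]] .
  obtain t' where t': "t' \<in> Hom C (A (Suc (Suc m))) (Y (Suc m))" and e_eq: "e = cmp C t' (f (Suc m))"
    using right_n_exact_factor[OF exact _ m e] t_ok unfolding e_def by auto
  have "cmp C (\<alpha> (Suc m)) (d (Suc m))
      = madd C (cmp C (\<alpha> (Suc m)) e) (cmp C (\<alpha> (Suc m)) (cmp C (\<alpha> m) t))"
    using comp_add_right[OF e comp_hom[OF t \<alpha>0] \<alpha>1] diff_add_cancel[OF d1 comp_hom[OF t \<alpha>0]]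
    unfolding e_def by simp
  also have "cmp C (\<alpha> (Suc m)) (cmp C (\<alpha> m) t) = mzero C (A (Suc m)) (Y (Suc (Suc m)))"
    using comp_assoc[OF t \<alpha>0 \<alpha>1] complex m comp_zero_left[OF t] hom_obs[OF \<alpha>1]
    unfolding is_complex_def by (metis One_nat_def Suc_le_mono diff_Suc_1 le0)
  finally have \<alpha>d: "cmp C (\<alpha> (Suc m)) (d (Suc m)) = cmp C (\<alpha> (Suc m)) e"
    using add_zero_right[OF comp_hom[OF e \<alpha>1]] by simp
  have "cmp C (mdiff C (d (Suc (Suc m))) (cmp C (\<alpha> (Suc m)) t')) (f (Suc m))
      = mdiff C (cmp C (\<alpha> (Suc m)) (d (Suc m))) (cmp C (\<alpha> (Suc m)) e)"
    using comp_diff_left[OF f d2 comp_hom[OF t' \<alpha>1]] ladder_commute[OF d m]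
      comp_assoc[OF f t' \<alpha>1] e_eq by simp
  also have "\<dots> = mzero C (A (Suc m)) (Y (Suc (Suc m)))"
    using \<alpha>d diff_self[OF comp_hom[OF e \<alpha>1]] by simp
  finally show ?thesis using t' by blast
qed

lemma ladder_null_at_zero_factors_last:
  assumes n: "1 \<le> n" and exact: "right_n_exact C n A f" and complex: "is_complex C n Y \<alpha>"
    and d: "ladder C n A f Y \<alpha> d" and d0: "d 0 = mzero C (A 0) (Y 0)"
  shows "\<exists>t \<in> Hom C (A (Suc n)) (Y n). d (Suc n) = cmp C (\<alpha> n) t"
proof -
  have seqA: "is_sequence C n A f" using exact by (rule right_n_exact_is_sequence)
  have seqY: "is_sequence C n Y \<alpha>" using complex unfolding is_complex_def by blast
  have homotopy: "\<exists>t \<in> Hom C (A (Suc m)) (Y m).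
      cmp C (mdiff C (d (Suc m)) (cmp C (\<alpha> m) t)) (f m) = mzero C (A m) (Y (Suc m))"
    if "m \<le> n" for m
    using that
  proof (induction m)
    case 0
    have f: "f 0 \<in> Hom C (A 0) (A 1)" and \<alpha>: "\<alpha> 0 \<in> Hom C (Y 0) (Y 1)"
      using is_sequence_hom seqA seqY by fastforce+
    have d1: "d 1 \<in> Hom C (A 1) (Y 1)" using ladder_hom[OF d] by simp
    have obs: "A 1 \<in> ob C" "Y 0 \<in> ob C" using hom_obs f \<alpha> by blast+
    define t where "t = mzero C (A 1) (Y 0)"
    have t: "t \<in> Hom C (A 1) (Y 0)" unfolding t_def using zero_hom obs by blast
    have tf: "cmp C t (f 0) = d 0" unfolding t_def d0 using comp_zero_left[OF f obs(2)] .
    have "cmp C (mdiff C (d 1) (cmp C (\<alpha> 0) t)) (f 0)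
        = mdiff C (cmp C (\<alpha> 0) (d 0)) (cmp C (\<alpha> 0) (cmp C t (f 0)))"
      using comp_diff_left[OF f d1 comp_hom[OF t \<alpha>]] ladder_commute[OF d, of 0]
        comp_assoc[OF f t \<alpha>] by simp
    also have "\<dots> = mzero C (A 0) (Y 1)"
      using tf diff_self comp_hom[OF f comp_hom[OF t \<alpha>]] comp_assoc[OF f t \<alpha>] by simp
    finally show ?case using t by auto
  next
    case (Suc m)
    then obtain t where "t \<in> Hom C (A (Suc m)) (Y m)"
      "cmp C (mdiff C (d (Suc m)) (cmp C (\<alpha> m) t)) (f m) = mzero C (A m) (Y (Suc m))"
      by auto
    then show ?case using ladder_null_homotopy_step[OF exact complex d Suc.prems] by blast
  qed
  obtain t where t: "t \<in> Hom C (A (Suc n)) (Y n)"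
    and t_ok: "cmp C (mdiff C (d (Suc n)) (cmp C (\<alpha> n) t)) (f n) = mzero C (A n) (Y (Suc n))"
    using homotopy by blast
  have \<alpha>: "\<alpha> n \<in> Hom C (Y n) (Y (Suc n))" using is_sequence_hom[OF seqY] by simp
  have dn: "d (Suc n) \<in> Hom C (A (Suc n)) (Y (Suc n))" using ladder_hom[OF d] by simp
  have "mdiff C (d (Suc n)) (cmp C (\<alpha> n) t) = mzero C (A (Suc n)) (Y (Suc n))"
    using right_n_exact_last_epi[OF exact n diff_hom[OF dn comp_hom[OF t \<alpha>]] t_ok] .
  then show ?thesis using diff_eq_zero_imp_eq[OF dn comp_hom[OF t \<alpha>]] t by blast
qed

lemma quot_eqI:
  assumes x: "x \<in> Hom C P Q" and y: "y \<in> Hom C P Q"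
    and u: "u \<in> Hom C P Y" and v: "v \<in> Hom C Y Q" and Y: "Y \<in> X"
    and diff: "mdiff C x y = cmp C v u"
  shows "quot_eq C X x y"
proof -
  have "src C (mdiff C x y) = P" "tgt C (mdiff C x y) = Q"
    using HomD[OF diff_hom[OF x y]] by simp_all
  then show ?thesis
    unfolding quot_eq_def factors_through_def using HomD[OF x] HomD[OF y] u v Y diff by auto
qed

lemma quot_eq_refl:
  assumes x: "x \<in> Hom C P Q" and Y: "Y \<in> X" "Y \<in> ob C"
  shows "quot_eq C X x x"
proof (rule quot_eqI[OF x x _ _ Y(1)])
  have obs: "P \<in> ob C" "Q \<in> ob C" using hom_obs[OF x] by blast+
  show "mzero C P Y \<in> Hom C P Y" "mzero C Y Q \<in> Hom C Y Q" using zero_hom obs Y(2) by blast+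
  show "mdiff C x x = cmp C (mzero C Y Q) (mzero C P Y)"
    using diff_self[OF x] comp_zero_left[OF zero_hom[OF obs(1) Y(2)] obs(2)] by simp
qed

lemma quot_eq_neg:
  assumes "quot_eq C X x y"
  shows "quot_eq C X (mneg C x) (mneg C y)"
proof -
  have x: "x \<in> Hom C (src C x) (tgt C x)" and y: "y \<in> Hom C (src C x) (tgt C x)"
    using assms unfolding quot_eq_def Hom_def by auto
  have "src C (mdiff C x y) = src C x" "tgt C (mdiff C x y) = tgt C x"
    using HomD[OF diff_hom[OF x y]] by simp_all
  then obtain Y u v where Y: "Y \<in> X" and u: "u \<in> Hom C (src C x) Y" and v: "v \<in> Hom C Y (tgt C x)"
    and diff: "mdiff C x y = cmp C v u"
    using assms unfolding quot_eq_def factors_through_def by auto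
  show ?thesis
  proof (rule quot_eqI[OF neg_hom[OF x] neg_hom[OF y] u neg_hom[OF v] Y])
    show "mdiff C (mneg C x) (mneg C y) = cmp C (mneg C v) u"
      using neg_diff[OF x y] diff comp_neg_left[OF u v] by simp
  qed
qed

lemma quot_eq_sign_mor: "quot_eq C X x y \<Longrightarrow> quot_eq C X (sign_mor C n x) (sign_mor C n y)"
  unfolding sign_mor_def using quot_eq_neg by simp

lemma comp_sign_mor_right:
  "f \<in> Hom C A B \<Longrightarrow> g \<in> Hom C B D \<Longrightarrow> cmp C g (sign_mor C n f) = sign_mor C n (cmp C g f)"
  unfolding sign_mor_def using comp_neg_right by simp

lemma comp_sign_mor_left:
  "f \<in> Hom C A B \<Longrightarrow> g \<in> Hom C B D \<Longrightarrow> cmp C (sign_mor C n g) f = sign_mor C n (cmp C g f)"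
  unfolding sign_mor_def using comp_neg_left by simp

lemma ladder_comparison_quot_eq:
  assumes n: "1 \<le> n"
    and rowA: "right_n_exact C n A f" and seqB: "is_sequence C n B g"
    and seqA': "is_sequence C n A' f'" and rowB': "right_n_exact C n B' g'" and B'n: "B' n \<in> X"
    and h: "ladder C n A f B g h"
    and a: "ladder C n A f A' f' a" and a0: "a 0 = idm C (A 0)"
    and b: "ladder C n B g B' g' b" and b0: "b 0 = idm C (B 0)"
    and c: "ladder C n A' f' B' g' c" and c0: "c 0 = h 0"
  shows "quot_eq C X (cmp C (c (Suc n)) (a (Suc n))) (cmp C (b (Suc n)) (h (Suc n)))"
proof -
  have seqA: "is_sequence C n A f" and seqB': "is_sequence C n B' g'"
    using rowA rowB' by (blast intro: right_n_exact_is_sequence)+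
  define d where "d i = mdiff C (cmp C (c i) (a i)) (cmp C (b i) (h i))" for i
  have d: "ladder C n A f B' g' d"
    unfolding d_def
    using ladder_diff[OF seqA seqB' ladder_comp[OF seqA seqA' seqB' a c] ladder_comp[OF seqA seqB seqB' h b]] .
  have h0: "h 0 \<in> Hom C (A 0) (B 0)" using ladder_hom[OF h] by simp
  have "idm C (B 0) \<in> Hom C (B 0) (B' 0)" using ladder_hom[OF b, of 0] b0 by simp
  then have "B' 0 = B 0" using id_hom[of "B 0"] hom_obs[OF h0] unfolding Hom_def by auto
  then have d0: "d 0 = mzero C (A 0) (B' 0)"
    unfolding d_def using a0 b0 c0 comp_id_right[OF h0] comp_id_left[OF h0] diff_self[OF h0] by simp
  obtain t where t: "t \<in> Hom C (A (Suc n)) (B' n)" and dt: "d (Suc n) = cmp C (g' n) t"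
    using ladder_null_at_zero_factors_last[OF n rowA right_n_exact_is_complex[OF rowB'] d d0] by blast
  show ?thesis
  proof (rule quot_eqI[OF _ _ t _ B'n])
    show "cmp C (c (Suc n)) (a (Suc n)) \<in> Hom C (A (Suc n)) (B' (Suc n))"
      "cmp C (b (Suc n)) (h (Suc n)) \<in> Hom C (A (Suc n)) (B' (Suc n))"
      using comp_hom ladder_hom a b c h by blast+
    show "g' n \<in> Hom C (B' n) (B' (Suc n))" using is_sequence_hom[OF seqB'] by simp
    show "mdiff C (cmp C (c (Suc n)) (a (Suc n))) (cmp C (b (Suc n)) (h (Suc n))) = cmp C (g' n) t"
      using dt unfolding d_def .
  qed
qed

end

theorem lemma3p3:
  fixes C :: "('o, 'm) addcat" and X :: "'o set" and n :: nat
    and SObj :: "'o \<Rightarrow> nat \<Rightarrow> 'o" and SMor :: "'o \<Rightarrow> nat \<Rightarrow> 'm"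
    and A B :: "nat \<Rightarrow> 'o" and f g h a b c :: "nat \<Rightarrow> 'm"
  assumes cat: "additive_category C"
    and n1: "1 \<le> n"
    and sub: "subcategory C X"
    and cf: "covariantly_finite C X"
    and spec: "\<forall>A0 \<in> ob C. \<forall>\<alpha>. left_approx C X A0 \<alpha> \<longrightarrow> has_special_n_cokernel C X n \<alpha>"
    and sig: "sigma_data C X n SObj SMor"
    and rowA: "right_n_exact C n A f" and monA: "X_monic C X (f 0)"
    and rowB: "right_n_exact C n B g" and monB: "X_monic C X (g 0)"
    and hlad: "ladder C n A f B g h"
    and alad: "ladder C n A f (SObj (A 0)) (SMor (A 0)) a" and a0: "a 0 = idm C (A 0)"
    and blad: "ladder C n B g (SObj (B 0)) (SMor (B 0)) b" and b0: "b 0 = idm C (B 0)"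
    and clad: "ladder C n (SObj (A 0)) (SMor (A 0)) (SObj (B 0)) (SMor (B 0)) c"
    and c0: "c 0 = h 0"
  shows "(\<forall>i \<le> n. quot_eq C X (cmp C (h (Suc i)) (f i)) (cmp C (g i) (h i))) \<and>
         quot_eq C X (cmp C (c (Suc n)) (sign_mor C n (a (Suc n))))
                     (cmp C (sign_mor C n (b (Suc n))) (h (Suc n))) \<and>
         quot_eq C X (cmp C (c (Suc n)) (a (Suc n))) (cmp C (b (Suc n)) (h (Suc n)))"
proof -
  \<comment> \<open>The \<open>\<X>\<close>-monic and approximation hypotheses only make the angles well defined;
      the comparison itself uses none of them.\<close>
  interpret additive_cat C by (rule additive_cat.intro[OF cat])
  have A0: "A 0 \<in> ob C" and B0: "B 0 \<in> ob C" using hom_obs ladder_hom[OF hlad, of 0] by auto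
  have sigA: "right_n_exact C n (SObj (A 0)) (SMor (A 0))"
    and sigB: "right_n_exact C n (SObj (B 0)) (SMor (B 0))" "SObj (B 0) n \<in> X"
    using sig A0 B0 n1 unfolding sigma_data_def by auto
  have XB: "SObj (B 0) n \<in> ob C"
    using hom_obs is_sequence_hom[OF right_n_exact_is_sequence[OF sigB(1)]] by blast
  have comparison: "quot_eq C X (cmp C (c (Suc n)) (a (Suc n))) (cmp C (b (Suc n)) (h (Suc n)))"
    using ladder_comparison_quot_eq[OF n1 rowA right_n_exact_is_sequence[OF rowB]
        right_n_exact_is_sequence[OF sigA] sigB hlad alad a0 blad b0 clad c0] .
  moreover have "quot_eq C X (cmp C (c (Suc n)) (sign_mor C n (a (Suc n))))
      (cmp C (sign_mor C n (b (Suc n))) (h (Suc n)))"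
    using quot_eq_sign_mor[OF comparison, of n]
      comp_sign_mor_right[OF ladder_hom[OF alad order_refl] ladder_hom[OF clad order_refl]]
      comp_sign_mor_left[OF ladder_hom[OF hlad order_refl] ladder_hom[OF blad order_refl]] by simp
  moreover have "quot_eq C X (cmp C (h (Suc i)) (f i)) (cmp C (g i) (h i))" if "i \<le> n" for i
    using quot_eq_refl[OF comp_hom[OF is_sequence_hom[OF right_n_exact_is_sequence[OF rowA] that]
          ladder_hom[OF hlad Suc_le_mono[THEN iffD2, OF that]]] sigB(2) XB]
      ladder_commute[OF hlad that] by simp
  ultimately show ?thesis by blast
qed

end
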